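(* Let $(V,\varphi,\xi,\eta,g)$, $\mathcal{F}$, $G$, $p_1,\dots,p_4$ and the inner product $\langle\cdot,\cdot\rangle$ be as in the context, and let $W_i=\mathrm{Im}\,p_i$ ($i=1,2,3,4$). Then $\mathcal{F}=W_1\oplus W_2\oplus W_3\oplus W_4$, the subspaces $W_i$ are mutually orthogonal with respect to $\langle\cdot,\cdot\rangle$, and each $W_i$ is invariant under the action of $G$.
   Context: Let $V$ be a real vector space of dimension $2n+1$ with an endomorphism $\varphi$, a vector $\xi$ and a linear form $\eta$ such that $\varphi\xi=0$, $\eta\circ\varphi=0$, $\eta(\xi)=1$, $\varphi^2=\mathrm{id}-\eta\otimes\xi$, and such that $\varphi$ restricted to $\mathbb{D}=\ker\eta$ has eigenvalues $\pm1$ with eigenspaces of equal dimension $n$. Let $g$ be a nondegenerate symmetric bilinear form on $V$ with $g(\varphi X,\varphi Y)=-g(X,Y)+\eta(X)\eta(Y)$; then $\eta(X)=g(X,\xi)$. Write $hX=X-\eta(X)\xi$. Fix a basis $\{e_1,\dots,e_{2n}\}$ of $\mathbb{D}$ and write $Y=Y^ie_i+\eta(Y)\xi$. Let $\mathcal{F}$ be the vector space of all $(0,3)$-tensors of the form $F(X,Y,Z)=Y^ig(\mathcal{A}_{e_i}X,Z)+\eta(Y)g(\mathcal{A}_\xi X,\varphi Z)$, where $\mathcal{A}_{e_i}:V\to V$ and $\mathcal{A}_\xi:V\to\mathbb{D}$ are linear maps satisfying for all $X$, $i,j$: $g(\mathcal{A}_{e_i}X,e_j)=-g(\mathcal{A}_{e_j}X,e_i)$;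 $\mathcal{A}_{\varphi e_i}X=-\varphi(\mathcal{A}_{e_i}X)-g(\mathcal{A}_\xi X,e_i)\xi$ (index extended linearly); $\eta(\mathcal{A}_{e_i}X)=-g(\mathcal{A}_\xi X,\varphi e_i)$; $\eta(\mathcal{A}_\xi X)=0$. The inner product on $\mathcal{F}$ is $\langle F_1,F_2\rangle=g^{aq}g^{br}g^{cs}F_1(f_a,f_b,f_c)F_2(f_q,f_r,f_s)$ for any basis $\{f_1,\dots,f_{2n+1}\}$ of $V$, $(g^{ab})$ the inverse of $(g(f_a,f_b))$. Let $G$ be the group of linear automorphisms $a$ of $V$ with $a\varphi=\varphi a$, $a\xi=\xi$, $\eta\circ a=\eta$, $g(aX,aY)=g(X,Y)$, acting on $\mathcal{F}$ by $(\lambda(a)F)(X,Y,Z)=F(a^{-1}X,a^{-1}Y,a^{-1}Z)$. Define $p_1(F)(X,Y,Z)=F(hX,hY,hZ)$; $p_2(F)(X,Y,Z)=-\eta(Y)F(hX,hZ,\xi)+\eta(Z)F(hX,hY,\xi)$; $p_3(F)(X,Y,Z)=\eta(X)F(\xi,hY,hZ)$; $p_4(F)(X,Y,Z)=\eta(X)\eta(Y)F(\xi,\xi,hZ)-\eta(X)\eta(Z)F(\xi,\xi,hY)$. *)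

theory Defs
  imports "HOL-Analysis.Analysis"
begin

type_synonym 'n tensor3 = "real^'n \<Rightarrow> real^'n \<Rightarrow> real^'n \<Rightarrow> real"

definition structure_ok ::
  "nat \<Rightarrow> (real^'n \<Rightarrow> real^'n) \<Rightarrow> real^'n \<Rightarrow> (real^'n \<Rightarrow> real)
     \<Rightarrow> (real^'n \<Rightarrow> real^'n \<Rightarrow> real) \<Rightarrow> bool" where
  "structure_ok n \<phi> \<xi> \<eta> g \<longleftrightarrow>
     CARD('n) = 2 * n + 1 \<and>
     linear \<phi> \<and> linear \<eta> \<and>
     \<phi> \<xi> = 0 \<and> (\<forall>X. \<eta> (\<phi> X) = 0) \<and> \<eta> \<xi> = 1 \<and>
     (\<forall>X. \<phi> (\<phi> X) = X - \<eta> X *\<^sub>R \<xi>) \<and>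
     dim {X. \<eta> X = 0 \<and> \<phi> X = X} = n \<and>
     dim {X. \<eta> X = 0 \<and> \<phi> X = - X} = n \<and>
     bilinear g \<and> (\<forall>X Y. g X Y = g Y X) \<and>
     (\<forall>X. (\<forall>Y. g X Y = 0) \<longrightarrow> X = 0) \<and>
     (\<forall>X Y. g (\<phi> X) (\<phi> Y) = - g X Y + \<eta> X * \<eta> Y)"

definition hproj :: "real^'n \<Rightarrow> (real^'n \<Rightarrow> real) \<Rightarrow> real^'n \<Rightarrow> real^'n" where
  "hproj \<xi> \<eta> X = X - \<eta> X *\<^sub>R \<xi>"

text \<open>The space \<F>. The family A_{e_i} extended linearly in the index is the map
  u \<mapsto> A u (for u in D = ker eta), so that Y^i A_{e_i} = A (h Y).
  Aksi plays the role of A_xi.\<close>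
definition calF ::
  "(real^'n \<Rightarrow> real^'n) \<Rightarrow> real^'n \<Rightarrow> (real^'n \<Rightarrow> real)
     \<Rightarrow> (real^'n \<Rightarrow> real^'n \<Rightarrow> real) \<Rightarrow> 'n tensor3 set" where
  "calF \<phi> \<xi> \<eta> g =
     {F. \<exists>A Aksi.
        bilinear A \<and> linear Aksi \<and>
        (\<forall>X u w. \<eta> u = 0 \<longrightarrow> \<eta> w = 0 \<longrightarrow> g (A u X) w = - g (A w X) u) \<and>
        (\<forall>X u. \<eta> u = 0 \<longrightarrow>
            A (\<phi> u) X = - \<phi> (A u X) - g (Aksi X) u *\<^sub>R \<xi>) \<and>
        (\<forall>X u. \<eta> u = 0 \<longrightarrow> \<eta> (A u X) = - g (Aksi X) (\<phi> u)) \<and>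
        (\<forall>X. \<eta> (Aksi X) = 0) \<and>
        F = (\<lambda>X Y Z. g (A (hproj \<xi> \<eta> Y) X) Z + \<eta> Y * g (Aksi X) (\<phi> Z))}"

definition gram :: "(real^'n \<Rightarrow> real^'n \<Rightarrow> real) \<Rightarrow> real^'n^'n" where
  "gram g = (\<chi> i j. g (axis i 1) (axis j 1))"

definition tinner :: "(real^'n \<Rightarrow> real^'n \<Rightarrow> real) \<Rightarrow> 'n tensor3 \<Rightarrow> 'n tensor3 \<Rightarrow> real" where
  "tinner g F1 F2 =
     (let gi = matrix_inv (gram g) in
      \<Sum>a\<in>UNIV. \<Sum>q\<in>UNIV. \<Sum>b\<in>UNIV. \<Sum>r\<in>UNIV. \<Sum>c\<in>UNIV. \<Sum>s\<in>UNIV.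
        gi$a$q * gi$b$r * gi$c$s *
        F1 (axis a 1) (axis b 1) (axis c 1) * F2 (axis q 1) (axis r 1) (axis s 1))"

definition grpG ::
  "(real^'n \<Rightarrow> real^'n) \<Rightarrow> real^'n \<Rightarrow> (real^'n \<Rightarrow> real)
     \<Rightarrow> (real^'n \<Rightarrow> real^'n \<Rightarrow> real) \<Rightarrow> (real^'n \<Rightarrow> real^'n) set" where
  "grpG \<phi> \<xi> \<eta> g =
     {a. linear a \<and> bij a \<and> (\<forall>X. a (\<phi> X) = \<phi> (a X)) \<and> a \<xi> = \<xi> \<and>
         (\<forall>X. \<eta> (a X) = \<eta> X) \<and> (\<forall>X Y. g (a X) (a Y) = g X Y)}"

definition gact :: "(real^'n \<Rightarrow> real^'n) \<Rightarrow> 'n tensor3 \<Rightarrow> 'n tensor3" where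
  "gact a F = (\<lambda>X Y Z. F (inv a X) (inv a Y) (inv a Z))"

definition pr :: "nat \<Rightarrow> real^'n \<Rightarrow> (real^'n \<Rightarrow> real) \<Rightarrow> 'n tensor3 \<Rightarrow> 'n tensor3" where
  "pr i \<xi> \<eta> F = (let h = hproj \<xi> \<eta> in
     if i = 1 then (\<lambda>X Y Z. F (h X) (h Y) (h Z))
     else if i = 2 then (\<lambda>X Y Z. - \<eta> Y * F (h X) (h Z) \<xi> + \<eta> Z * F (h X) (h Y) \<xi>)
     else if i = 3 then (\<lambda>X Y Z. \<eta> X * F \<xi> (h Y) (h Z))
     else if i = 4 then (\<lambda>X Y Z. \<eta> X * \<eta> Y * F \<xi> \<xi> (h Z) - \<eta> X * \<eta> Z * F \<xi> \<xi> (h Y))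
     else (\<lambda>X Y Z. 0))"

definition Wsp :: "nat \<Rightarrow> (real^'n \<Rightarrow> real^'n) \<Rightarrow> real^'n \<Rightarrow> (real^'n \<Rightarrow> real)
     \<Rightarrow> (real^'n \<Rightarrow> real^'n \<Rightarrow> real) \<Rightarrow> 'n tensor3 set" where
  "Wsp i \<phi> \<xi> \<eta> g = pr i \<xi> \<eta> ` calF \<phi> \<xi> \<eta> g"

end

theory Submission
  imports Defs
begin

text \<open>Split every argument as \<open>X = h X + \<eta>(X) \<xi>\<close>. A tensor \<open>F \<in> \<F>\<close> then breaks into pieces
  according to which slots receive \<open>\<xi>\<close>; the defining relations of \<open>\<F>\<close> kill \<open>F(X,\<xi>,\<xi>)\<close> and make
  \<open>F(X,h Y,\<xi>) = -F(X,\<xi>,h Y)\<close>, so exactly the four pieces \<open>p\<^sub>1 F, \<dots>, p\<^sub>4 F\<close> survive and they add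
  up to \<open>F\<close>. The \<open>p\<^sub>i\<close> are complementary idempotents, and each \<open>p\<^sub>i F\<close> lies in \<open>\<F>\<close> again because
  it is the tensor of an explicitly modified pair \<open>(\<A>, \<A>\<^sub>\<xi>)\<close>. Orthogonality: when one tensor
  carries a factor \<open>\<eta>\<close> in some slot, contracting that slot with \<open>g\<^sup>-\<^sup>1\<close> inserts \<open>\<xi>\<close> into the
  same slot of the other tensor, where it vanishes. Finally \<open>G\<close> fixes \<open>\<xi>\<close>, \<open>\<eta>\<close> and hence \<open>h\<close>, so
  it commutes with the \<open>p\<^sub>i\<close>, and it preserves \<open>\<F>\<close> by transporting \<open>(\<A>, \<A>\<^sub>\<xi>)\<close>.\<close>

lemma linear_eq_sum_axis:
  fixes f :: "real^'n \<Rightarrow> real"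
  assumes "linear f"
  shows "f x = (\<Sum>i\<in>UNIV. x$i * f (axis i 1))"
proof -
  have "f x = f (\<Sum>i\<in>UNIV. x$i *\<^sub>R axis i 1)"
    using basis_expansion[of x] by (simp add: scalar_mult_eq_scaleR)
  also have "\<dots> = (\<Sum>i\<in>UNIV. x$i * f (axis i 1))"
    using assms by (simp add: linear_sum linear_scale)
  finally show ?thesis .
qed

lemma matrix_inv_inverse:
  fixes A :: "'a::semiring_1^'n^'m"
  assumes "invertible A"
  shows "A ** matrix_inv A = mat 1" "matrix_inv A ** A = mat 1"
proof -
  have "A ** matrix_inv A = mat 1 \<and> matrix_inv A ** A = mat 1"
    using assms unfolding invertible_def matrix_inv_def by (rule someI_ex)
  then show "A ** matrix_inv A = mat 1" "matrix_inv A ** A = mat 1" by auto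
qed

lemma transpose_matrix_inv_symmetric:
  fixes A :: "'a::comm_semiring_1^'n^'n"
  assumes "invertible A" "transpose A = A"
  shows "transpose (matrix_inv A) = matrix_inv A"
proof -
  have "transpose (matrix_inv A) ** A = mat 1"
    by (metis matrix_inv_inverse(1)[OF assms(1)] assms(2) matrix_transpose_mul transpose_mat)
  then show ?thesis
    by (metis matrix_inv_inverse(1)[OF assms(1)] matrix_mul_assoc matrix_mul_lid matrix_mul_rid)
qed

lemma sum_swap_pairs:
  fixes f :: "'a \<Rightarrow> 'a \<Rightarrow> 'b \<Rightarrow> 'b \<Rightarrow> 'c \<Rightarrow> 'c \<Rightarrow> 'd::comm_monoid_add"
  shows "(\<Sum>a\<in>A. \<Sum>q\<in>A. \<Sum>b\<in>B. \<Sum>r\<in>B. \<Sum>c\<in>C. \<Sum>s\<in>C. f a q b r c s) =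
    (\<Sum>q\<in>A. \<Sum>a\<in>A. \<Sum>r\<in>B. \<Sum>b\<in>B. \<Sum>s\<in>C. \<Sum>c\<in>C. f a q b r c s)"
proof -
  have "(\<Sum>c\<in>C. \<Sum>s\<in>C. f a q b r c s) = (\<Sum>s\<in>C. \<Sum>c\<in>C. f a q b r c s)" for a q b r
    by (rule sum.swap)
  then have "(\<Sum>b\<in>B. \<Sum>r\<in>B. \<Sum>c\<in>C. \<Sum>s\<in>C. f a q b r c s) =
      (\<Sum>r\<in>B. \<Sum>b\<in>B. \<Sum>s\<in>C. \<Sum>c\<in>C. f a q b r c s)" for a q
    by (subst sum.swap) simp
  then show ?thesis by (subst sum.swap) simp
qed

definition trilinear :: "('a::real_vector \<Rightarrow> 'b::real_vector \<Rightarrow> 'c::real_vector \<Rightarrow> real) \<Rightarrow> bool" where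
  "trilinear F \<longleftrightarrow>
     (\<forall>Y Z. linear (\<lambda>X. F X Y Z)) \<and> (\<forall>X Z. linear (\<lambda>Y. F X Y Z)) \<and> (\<forall>X Y. linear (F X Y))"

lemma trilinearD:
  assumes "trilinear F"
  shows "F (X + X') Y Z = F X Y Z + F X' Y Z" "F (c *\<^sub>R X) Y Z = c * F X Y Z" "F 0 Y Z = 0"
    and "F X (Y + Y') Z = F X Y Z + F X Y' Z" "F X (c *\<^sub>R Y) Z = c * F X Y Z" "F X 0 Z = 0"
    and "F X Y (Z + Z') = F X Y Z + F X Y Z'" "F X Y (c *\<^sub>R Z) = c * F X Y Z" "F X Y 0 = 0"
proof -
  from assms have "linear (\<lambda>X. F X Y Z)" "linear (\<lambda>Y. F X Y Z)" "linear (F X Y)" for X Y Z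
    unfolding trilinear_def by blast+
  from this[THEN linear_add] this[THEN linear_scale] this[THEN linear_0] show
    "F (X + X') Y Z = F X Y Z + F X' Y Z" "F (c *\<^sub>R X) Y Z = c * F X Y Z" "F 0 Y Z = 0"
    "F X (Y + Y') Z = F X Y Z + F X Y' Z" "F X (c *\<^sub>R Y) Z = c * F X Y Z" "F X 0 Z = 0"
    "F X Y (Z + Z') = F X Y Z + F X Y Z'" "F X Y (c *\<^sub>R Z) = c * F X Y Z" "F X Y 0 = 0"
    by simp_all
qed

lemma pr_1: "pr 1 \<xi> \<eta> F = (\<lambda>X Y Z. F (hproj \<xi> \<eta> X) (hproj \<xi> \<eta> Y) (hproj \<xi> \<eta> Z))"
  by (simp add: pr_def Let_def)

lemma pr_2:
  "pr 2 \<xi> \<eta> F = (\<lambda>X Y Z. - \<eta> Y * F (hproj \<xi> \<eta> X) (hproj \<xi> \<eta> Z) \<xi> + \<eta> Z * F (hproj \<xi> \<eta> X) (hproj \<xi> \<eta> Y) \<xi>)"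
  by (simp add: pr_def Let_def)

lemma pr_3: "pr 3 \<xi> \<eta> F = (\<lambda>X Y Z. \<eta> X * F \<xi> (hproj \<xi> \<eta> Y) (hproj \<xi> \<eta> Z))"
  by (simp add: pr_def Let_def)

lemma pr_4:
  "pr 4 \<xi> \<eta> F = (\<lambda>X Y Z. \<eta> X * \<eta> Y * F \<xi> \<xi> (hproj \<xi> \<eta> Z) - \<eta> X * \<eta> Z * F \<xi> \<xi> (hproj \<xi> \<eta> Y))"
  by (simp add: pr_def Let_def)

text \<open>The simplifier turns a hypothesis \<open>i = 1\<close> on \<open>nat\<close> into \<open>i = Suc 0\<close>, hence the second form of \<open>pr_1\<close>.\<close>
lemmas pr_simps = pr_1 pr_1[unfolded One_nat_def] pr_2 pr_3 pr_4

lemma pr_add: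
  "pr i \<xi> \<eta> (\<lambda>X Y Z. F X Y Z + F' X Y Z) = (\<lambda>X Y Z. pr i \<xi> \<eta> F X Y Z + pr i \<xi> \<eta> F' X Y Z)"
  by (simp add: pr_def Let_def algebra_simps)

locale nondegenerate_symmetric_form =
  fixes g :: "real^'n \<Rightarrow> real^'n \<Rightarrow> real"
  assumes bilinear: "bilinear g"
    and symmetric: "g X Y = g Y X"
    and nondegenerate: "(\<forall>Y. g X Y = 0) \<Longrightarrow> X = 0"
begin

lemmas bilinear_simps[simp] = bilinear_ladd[OF bilinear] bilinear_radd[OF bilinear]
  bilinear_lmul[OF bilinear] bilinear_rmul[OF bilinear] bilinear_lneg[OF bilinear]
  bilinear_rneg[OF bilinear] bilinear_lzero[OF bilinear] bilinear_rzero[OF bilinear]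
  bilinear_lsub[OF bilinear] bilinear_rsub[OF bilinear]

abbreviation ginv :: "real^'n^'n" where "ginv \<equiv> matrix_inv (gram g)"

lemma gram_mult_vec: "(gram g *v x) $ i = g (axis i 1) x"
proof -
  have "linear (g (axis i 1))" using bilinear unfolding bilinear_def by blast
  then have "g (axis i 1) x = (\<Sum>j\<in>UNIV. x$j * g (axis i 1) (axis j 1))"
    by (rule linear_eq_sum_axis)
  then show ?thesis by (simp add: matrix_vector_mult_def gram_def mult.commute)
qed

lemma invertible_gram: "invertible (gram g)"
  unfolding invertible_left_inverse matrix_left_invertible_ker
proof (intro allI impI)
  fix x assume "gram g *v x = 0"
  then have x: "g (axis i 1) x = 0" for i by (metis gram_mult_vec zero_index)
  have "g x Y = 0" for Y
  proof -
    have "linear (\<lambda>X. g X x)" using bilinear unfolding bilinear_def by blast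
    then have "g Y x = (\<Sum>i\<in>UNIV. Y$i * g (axis i 1) x)" by (rule linear_eq_sum_axis)
    then show ?thesis using x symmetric by simp
  qed
  then show "x = 0" by (simp add: nondegenerate)
qed

lemma ginv_symmetric: "ginv $ a $ q = ginv $ q $ a"
proof -
  have "transpose (gram g) = gram g" by (simp add: transpose_def gram_def vec_eq_iff symmetric)
  then have "transpose ginv = ginv" by (rule transpose_matrix_inv_symmetric[OF invertible_gram])
  then have "transpose ginv $ q $ a = ginv $ q $ a" by simp
  then show ?thesis by (simp add: transpose_def)
qed

text \<open>Raising the index of the covector \<open>g(\<cdot>, v)\<close> with \<open>g\<^sup>-\<^sup>1\<close> gives back \<open>v\<close>.\<close>
lemma ginv_contract:
  assumes "linear f"
  shows "(\<Sum>a\<in>UNIV. \<Sum>q\<in>UNIV. ginv$a$q * (g (axis q 1) v * f (axis a 1))) = f v"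
proof -
  have raise: "(\<Sum>q\<in>UNIV. ginv$a$q * g (axis q 1) v) = v$a" for a
  proof -
    have "(\<Sum>q\<in>UNIV. ginv$a$q * g (axis q 1) v) = (ginv *v (gram g *v v))$a"
      by (simp only: matrix_vector_mult_def[of ginv] vec_lambda_beta gram_mult_vec)
    then show ?thesis by (simp add: matrix_vector_mul_assoc matrix_inv_inverse invertible_gram)
  qed
  have "(\<Sum>a\<in>UNIV. \<Sum>q\<in>UNIV. ginv$a$q * (g (axis q 1) v * f (axis a 1)))
      = (\<Sum>a\<in>UNIV. (\<Sum>q\<in>UNIV. ginv$a$q * g (axis q 1) v) * f (axis a 1))"
    by (simp add: sum_distrib_right mult.assoc)
  also have "\<dots> = (\<Sum>a\<in>UNIV. v$a * f (axis a 1))" by (simp only: raise)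
  also have "\<dots> = f v" by (rule linear_eq_sum_axis[OF assms, symmetric])
  finally show ?thesis .
qed

lemma tinner_commute: "tinner g F F' = tinner g F' F"
  unfolding tinner_def Let_def
  by (subst sum_swap_pairs) (intro sum.cong refl, simp add: ginv_symmetric mult_ac)

lemma tinner_add_right:
  "tinner g F (\<lambda>X Y Z. F1 X Y Z + F2 X Y Z) = tinner g F F1 + tinner g F F2"
  by (simp add: tinner_def Let_def distrib_left sum.distrib)

lemma tinner_eq_0_slot1:
  assumes F: "trilinear F" and vanish: "\<And>Y Z. F v Y Z = 0"
    and F': "\<And>X Y Z. F' X Y Z = g X v * K Y Z"
  shows "tinner g F F' = 0"
proof -
  define \<Psi> where "\<Psi> X = (\<Sum>b\<in>UNIV. \<Sum>r\<in>UNIV. \<Sum>c\<in>UNIV. \<Sum>s\<in>UNIV.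
      ginv$b$r * ginv$c$s * F X (axis b 1) (axis c 1) * K (axis r 1) (axis s 1))" for X
  have "linear \<Psi>"
    by (intro linearI) (simp_all add: \<Psi>_def trilinearD[OF F] algebra_simps sum.distrib sum_distrib_left)
  have "tinner g F F' = (\<Sum>a\<in>UNIV. \<Sum>q\<in>UNIV. ginv$a$q * (g (axis q 1) v * \<Psi> (axis a 1)))"
    by (simp add: tinner_def Let_def \<Psi>_def F' sum_distrib_left mult_ac)
  also have "\<dots> = \<Psi> v" by (rule ginv_contract[OF \<open>linear \<Psi>\<close>])
  also have "\<dots> = 0" by (simp add: \<Psi>_def vanish)
  finally show ?thesis .
qed

lemma tinner_eq_0_slot2:
  assumes F: "trilinear F" and vanish: "\<And>X Z. F X v Z = 0"
    and F': "\<And>X Y Z. F' X Y Z = g Y v * K X Z"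
  shows "tinner g F F' = 0"
proof -
  define \<Psi> where "\<Psi> a q Y = (\<Sum>c\<in>UNIV. \<Sum>s\<in>UNIV.
      ginv$a$q * ginv$c$s * F (axis a 1) Y (axis c 1) * K (axis q 1) (axis s 1))" for a q Y
  have lin: "linear (\<Psi> a q)" for a q
    by (intro linearI) (simp_all add: \<Psi>_def trilinearD[OF F] algebra_simps sum.distrib sum_distrib_left)
  have "tinner g F F' = (\<Sum>a\<in>UNIV. \<Sum>q\<in>UNIV.
      \<Sum>b\<in>UNIV. \<Sum>r\<in>UNIV. ginv$b$r * (g (axis r 1) v * \<Psi> a q (axis b 1)))"
    by (simp add: tinner_def Let_def \<Psi>_def F' sum_distrib_left mult_ac)
  also have "\<dots> = (\<Sum>a\<in>UNIV. \<Sum>q\<in>UNIV. \<Psi> a q v)" by (simp only: ginv_contract[OF lin])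
  also have "\<dots> = 0" by (simp add: \<Psi>_def vanish)
  finally show ?thesis .
qed

lemma tinner_eq_0_slot3:
  assumes F: "trilinear F" and vanish: "\<And>X Y. F X Y v = 0"
    and F': "\<And>X Y Z. F' X Y Z = g Z v * K X Y"
  shows "tinner g F F' = 0"
proof -
  define \<Psi> where "\<Psi> a q b r Z =
      ginv$a$q * ginv$b$r * F (axis a 1) (axis b 1) Z * K (axis q 1) (axis r 1)" for a q b r Z
  have lin: "linear (\<Psi> a q b r)" for a q b r
    by (intro linearI) (simp_all add: \<Psi>_def trilinearD[OF F] algebra_simps)
  have "tinner g F F' = (\<Sum>a\<in>UNIV. \<Sum>q\<in>UNIV. \<Sum>b\<in>UNIV. \<Sum>r\<in>UNIV.
      \<Sum>c\<in>UNIV. \<Sum>s\<in>UNIV. ginv$c$s * (g (axis s 1) v * \<Psi> a q b r (axis c 1)))"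
    by (simp add: tinner_def Let_def \<Psi>_def F' sum_distrib_left mult_ac)
  also have "\<dots> = (\<Sum>a\<in>UNIV. \<Sum>q\<in>UNIV. \<Sum>b\<in>UNIV. \<Sum>r\<in>UNIV. \<Psi> a q b r v)"
    by (simp only: ginv_contract[OF lin])
  also have "\<dots> = 0" by (simp add: \<Psi>_def vanish)
  finally show ?thesis .
qed

lemma tinner_eq_0_slot23:
  assumes F: "trilinear F" and vanish: "\<And>X Z. F X v Z = 0" "\<And>X Y. F X Y v = 0"
    and F': "\<And>X Y Z. F' X Y Z = g Y v * K X Z + g Z v * K' X Y"
  shows "tinner g F F' = 0"
proof -
  have "tinner g F (\<lambda>X Y Z. g Y v * K X Z) = 0"
    by (rule tinner_eq_0_slot2[OF F vanish(1), of _ K]) simp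
  moreover have "tinner g F (\<lambda>X Y Z. g Z v * K' X Y) = 0"
    by (rule tinner_eq_0_slot3[OF F vanish(2), of _ K']) simp
  ultimately show ?thesis
    unfolding F'[abs_def] tinner_add_right by simp
qed

end

locale almost_paracontact_metric = nondegenerate_symmetric_form g
  for g :: "real^'n \<Rightarrow> real^'n \<Rightarrow> real" +
  fixes \<phi> :: "real^'n \<Rightarrow> real^'n" and \<xi> :: "real^'n" and \<eta> :: "real^'n \<Rightarrow> real"
  assumes linear_phi: "linear \<phi>" and linear_eta: "linear \<eta>"
    and phi_xi[simp]: "\<phi> \<xi> = 0" and eta_phi[simp]: "\<eta> (\<phi> X) = 0" and eta_xi[simp]: "\<eta> \<xi> = 1"
    and phi_phi: "\<phi> (\<phi> X) = X - \<eta> X *\<^sub>R \<xi>"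
    and g_phi_phi: "g (\<phi> X) (\<phi> Y) = - g X Y + \<eta> X * \<eta> Y"
begin

lemmas eta_simps[simp] = linear_add[OF linear_eta] linear_scale[OF linear_eta]
  linear_0[OF linear_eta] linear_diff[OF linear_eta] linear_neg[OF linear_eta]

lemmas phi_simps[simp] = linear_add[OF linear_phi] linear_scale[OF linear_phi]
  linear_0[OF linear_phi] linear_diff[OF linear_phi] linear_neg[OF linear_phi]

lemma g_xi[simp]: "g X \<xi> = \<eta> X"
  using g_phi_phi[of X \<xi>] by simp

lemma g_xi_left[simp]: "g \<xi> X = \<eta> X"
  using g_xi symmetric by metis

abbreviation h :: "real^'n \<Rightarrow> real^'n" where "h \<equiv> hproj \<xi> \<eta>"

lemma eta_h[simp]: "\<eta> (h X) = 0" by (simp add: hproj_def)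
lemma phi_h[simp]: "\<phi> (h X) = \<phi> X" by (simp add: hproj_def)
lemma h_xi[simp]: "h \<xi> = 0" by (simp add: hproj_def)
lemma h_h[simp]: "h (h X) = h X" by (simp add: hproj_def)
lemma g_h[simp]: "g W (h Z) = g W Z - \<eta> Z * \<eta> W" by (simp add: hproj_def)

lemma linear_h: "linear h"
  by (rule linearI) (simp_all add: hproj_def algebra_simps)

lemmas h_simps[simp] = linear_add[OF linear_h] linear_scale[OF linear_h] linear_0[OF linear_h]

definition admissible :: "(real^'n \<Rightarrow> real^'n \<Rightarrow> real^'n) \<Rightarrow> (real^'n \<Rightarrow> real^'n) \<Rightarrow> bool" where
  "admissible A A\<^sub>\<xi> \<longleftrightarrow> bilinear A \<and> linear A\<^sub>\<xi> \<and>
     (\<forall>X u w. \<eta> u = 0 \<longrightarrow> \<eta> w = 0 \<longrightarrow> g (A u X) w = - g (A w X) u) \<and>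
     (\<forall>X u. \<eta> u = 0 \<longrightarrow> A (\<phi> u) X = - \<phi> (A u X) - g (A\<^sub>\<xi> X) u *\<^sub>R \<xi>) \<and>
     (\<forall>X u. \<eta> u = 0 \<longrightarrow> \<eta> (A u X) = - g (A\<^sub>\<xi> X) (\<phi> u)) \<and>
     (\<forall>X. \<eta> (A\<^sub>\<xi> X) = 0)"

definition tensor_of :: "(real^'n \<Rightarrow> real^'n \<Rightarrow> real^'n) \<Rightarrow> (real^'n \<Rightarrow> real^'n) \<Rightarrow> 'n tensor3" where
  "tensor_of A A\<^sub>\<xi> = (\<lambda>X Y Z. g (A (h Y) X) Z + \<eta> Y * g (A\<^sub>\<xi> X) (\<phi> Z))"

lemma calF_iff: "F \<in> calF \<phi> \<xi> \<eta> g \<longleftrightarrow> (\<exists>A A\<^sub>\<xi>. admissible A A\<^sub>\<xi> \<and> F = tensor_of A A\<^sub>\<xi>)"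
  unfolding calF_def admissible_def tensor_of_def by blast

lemma calF_trilinear:
  assumes "F \<in> calF \<phi> \<xi> \<eta> g"
  shows "trilinear F"
proof -
  obtain A A\<^sub>\<xi> where adm: "admissible A A\<^sub>\<xi>" and F: "F = tensor_of A A\<^sub>\<xi>"
    using assms calF_iff by blast
  have A: "bilinear A" and lin: "linear A\<^sub>\<xi>" using adm unfolding admissible_def by blast+
  note [simp] = bilinear_ladd[OF A] bilinear_radd[OF A] bilinear_lmul[OF A] bilinear_rmul[OF A]
    linear_add[OF lin] linear_scale[OF lin]
  show ?thesis
    unfolding trilinear_def F tensor_of_def by (intro conjI allI linearI) (simp_all add: algebra_simps)
qed

lemma calF_xi:
  assumes "F \<in> calF \<phi> \<xi> \<eta> g"
  shows "F X (h Z) \<xi> = - F X \<xi> (h Z)" "F X \<xi> \<xi> = 0"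
proof -
  obtain A A\<^sub>\<xi> where adm: "admissible A A\<^sub>\<xi>" and F: "F = tensor_of A A\<^sub>\<xi>"
    using assms calF_iff by blast
  have A: "bilinear A" and eta_A: "\<eta> (A (h Z) X) = - g (A\<^sub>\<xi> X) (\<phi> Z)"
    using adm unfolding admissible_def by auto
  show "F X (h Z) \<xi> = - F X \<xi> (h Z)" "F X \<xi> \<xi> = 0"
    using eta_A by (simp_all add: F tensor_of_def bilinear_lzero[OF A])
qed

text \<open>The pieces \<open>p\<^sub>1\<close>, \<open>p\<^sub>3\<close> (with \<open>T = h\<close>, resp. \<open>T X = \<eta>(X) \<xi>\<close>) of a tensor in \<open>\<F>\<close>
  belong to \<open>\<F>\<close>: the \<open>\<xi>\<close>-component of \<open>\<A>\<close> is absorbed into \<open>\<A>'\<close> and \<open>\<A>'\<^sub>\<xi> = 0\<close>.\<close>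
lemma calF_horizontal_part:
  assumes G: "G \<in> calF \<phi> \<xi> \<eta> g" and T: "linear T"
  shows "(\<lambda>X Y Z. G (T X) (h Y) (h Z)) \<in> calF \<phi> \<xi> \<eta> g"
proof -
  obtain A A\<^sub>\<xi> where adm: "admissible A A\<^sub>\<xi>" and GA: "G = tensor_of A A\<^sub>\<xi>"
    using G calF_iff by blast
  have A: "bilinear A" and lin: "linear A\<^sub>\<xi>"
    and skew: "\<And>X u w. \<eta> u = 0 \<Longrightarrow> \<eta> w = 0 \<Longrightarrow> g (A u X) w = - g (A w X) u"
    and A_phi: "\<And>X u. \<eta> u = 0 \<Longrightarrow> A (\<phi> u) X = - \<phi> (A u X) - g (A\<^sub>\<xi> X) u *\<^sub>R \<xi>"
    and eta_A: "\<And>X u. \<eta> u = 0 \<Longrightarrow> \<eta> (A u X) = - g (A\<^sub>\<xi> X) (\<phi> u)"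
    using adm unfolding admissible_def by blast+
  note [simp] = bilinear_ladd[OF A] bilinear_radd[OF A] bilinear_lmul[OF A]
    bilinear_rmul[OF A] bilinear_lzero[OF A] bilinear_rzero[OF A]
    linear_add[OF T] linear_scale[OF T] linear_add[OF lin] linear_scale[OF lin]
  define A' where "A' = (\<lambda>u X. A u (T X) + g (A\<^sub>\<xi> (T X)) (\<phi> u) *\<^sub>R \<xi>)"
  have "admissible A' (\<lambda>X. 0)"
    unfolding admissible_def
  proof (intro conjI allI impI)
    show "bilinear A'" unfolding bilinear_def A'_def
      by (auto intro!: linearI simp: algebra_simps)
    show "linear (\<lambda>X::real^'n. 0::real^'n)" by (rule linearI) simp_all
  next
    fix X u w :: "real^'n" assume "\<eta> u = 0" "\<eta> w = 0"
    then show "g (A' u X) w = - g (A' w X) u" using skew[of u w "T X"] by (simp add: A'_def)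
  next
    fix X u :: "real^'n" assume u: "\<eta> u = 0"
    show "A' (\<phi> u) X = - \<phi> (A' u X) - g 0 u *\<^sub>R \<xi>"
      using u by (simp add: A'_def A_phi phi_phi)
    show "\<eta> (A' u X) = - g 0 (\<phi> u)"
      using u by (simp add: A'_def eta_A)
  qed simp
  moreover have "(\<lambda>X Y Z. G (T X) (h Y) (h Z)) = tensor_of A' (\<lambda>X. 0)"
  proof (intro ext)
    fix X Y Z
    have "\<eta> (A (h Y) (T X)) = - g (A\<^sub>\<xi> (T X)) (\<phi> Y)" using eta_A[of "h Y" "T X"] by simp
    then show "G (T X) (h Y) (h Z) = tensor_of A' (\<lambda>X. 0) X Y Z"
      by (simp add: GA tensor_of_def A'_def)
  qed
  ultimately show ?thesis using calF_iff by blast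
qed

text \<open>Likewise for \<open>p\<^sub>2\<close>, \<open>p\<^sub>4\<close>: here \<open>\<A>'\<close> only keeps the \<open>\<xi>\<close>-component that \<open>\<A>'\<^sub>\<xi>\<close> forces.\<close>
lemma calF_vertical_part:
  assumes G: "G \<in> calF \<phi> \<xi> \<eta> g" and T: "linear T"
  shows "(\<lambda>X Y Z. - \<eta> Y * G (T X) (h Z) \<xi> + \<eta> Z * G (T X) (h Y) \<xi>) \<in> calF \<phi> \<xi> \<eta> g"
proof -
  obtain A A\<^sub>\<xi> where adm: "admissible A A\<^sub>\<xi>" and GA: "G = tensor_of A A\<^sub>\<xi>"
    using G calF_iff by blast
  have lin: "linear A\<^sub>\<xi>"
    and eta_A: "\<And>X u. \<eta> u = 0 \<Longrightarrow> \<eta> (A u X) = - g (A\<^sub>\<xi> X) (\<phi> u)"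
    and eta_A\<^sub>\<xi>: "\<And>X. \<eta> (A\<^sub>\<xi> X) = 0"
    using adm unfolding admissible_def by blast+
  note [simp] = linear_add[OF T] linear_scale[OF T] linear_add[OF lin] linear_scale[OF lin]
  define A' where "A' = (\<lambda>u X. - g (A\<^sub>\<xi> (T X)) (\<phi> u) *\<^sub>R \<xi>)"
  have "admissible A' (\<lambda>X. A\<^sub>\<xi> (T X))"
    unfolding admissible_def
  proof (intro conjI allI impI)
    show "bilinear A'" unfolding bilinear_def A'_def
      by (auto intro!: linearI simp: algebra_simps)
    show "linear (\<lambda>X. A\<^sub>\<xi> (T X))" by (rule linearI) simp_all
  next
    fix X u w :: "real^'n" assume "\<eta> u = 0" "\<eta> w = 0"
    then show "g (A' u X) w = - g (A' w X) u" by (simp add: A'_def)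
  next
    fix X u :: "real^'n" assume u: "\<eta> u = 0"
    show "A' (\<phi> u) X = - \<phi> (A' u X) - g (A\<^sub>\<xi> (T X)) u *\<^sub>R \<xi>"
      using u by (simp add: A'_def phi_phi)
    show "\<eta> (A' u X) = - g (A\<^sub>\<xi> (T X)) (\<phi> u)"
      using u by (simp add: A'_def)
  qed (simp add: eta_A\<^sub>\<xi>)
  moreover have "(\<lambda>X Y Z. - \<eta> Y * G (T X) (h Z) \<xi> + \<eta> Z * G (T X) (h Y) \<xi>) = tensor_of A' (\<lambda>X. A\<^sub>\<xi> (T X))"
  proof (intro ext)
    fix X Y Z
    have "\<eta> (A (h Y) (T X)) = - g (A\<^sub>\<xi> (T X)) (\<phi> Y)" "\<eta> (A (h Z) (T X)) = - g (A\<^sub>\<xi> (T X)) (\<phi> Z)"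
      using eta_A[of "h Y" "T X"] eta_A[of "h Z" "T X"] by simp_all
    then show "- \<eta> Y * G (T X) (h Z) \<xi> + \<eta> Z * G (T X) (h Y) \<xi> = tensor_of A' (\<lambda>X. A\<^sub>\<xi> (T X)) X Y Z"
      by (simp add: GA tensor_of_def A'_def algebra_simps)
  qed
  ultimately show ?thesis using calF_iff by blast
qed

lemma pr_in_calF:
  assumes F: "F \<in> calF \<phi> \<xi> \<eta> g" and i: "i \<in> {1..4}"
  shows "pr i \<xi> \<eta> F \<in> calF \<phi> \<xi> \<eta> g"
proof -
  note tri = trilinearD[OF calF_trilinear[OF F]]
  have vert: "linear (\<lambda>X. \<eta> X *\<^sub>R \<xi>)" by (rule linearI) (simp_all add: algebra_simps)
  have "pr 3 \<xi> \<eta> F = (\<lambda>X Y Z. F (\<eta> X *\<^sub>R \<xi>) (h Y) (h Z))"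
    by (simp add: pr_3 tri)
  moreover have "pr 4 \<xi> \<eta> F = (\<lambda>X Y Z. - \<eta> Y * F (\<eta> X *\<^sub>R \<xi>) (h Z) \<xi> + \<eta> Z * F (\<eta> X *\<^sub>R \<xi>) (h Y) \<xi>)"
    by (simp add: pr_4 tri calF_xi[OF F] algebra_simps)
  moreover have "i = 1 \<or> i = 2 \<or> i = 3 \<or> i = 4" using i by auto
  ultimately show ?thesis
    using calF_horizontal_part[OF F] calF_vertical_part[OF F] linear_h vert
    by (auto simp: pr_simps)
qed

lemma pr_pr:
  assumes "trilinear F" "i \<in> {1..4}" "j \<in> {1..4}"
  shows "pr j \<xi> \<eta> (pr i \<xi> \<eta> F) = (if i = j then pr i \<xi> \<eta> F else (\<lambda>X Y Z. 0))"
proof -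
  have "i = 1 \<or> i = 2 \<or> i = 3 \<or> i = 4" "j = 1 \<or> j = 2 \<or> j = 3 \<or> j = 4"
    using assms(2,3) by auto
  then show ?thesis by (elim disjE) (simp_all add: pr_simps trilinearD(3,6,9)[OF assms(1)])
qed

lemma calF_eq_sum_pr:
  assumes F: "F \<in> calF \<phi> \<xi> \<eta> g"
  shows "F = (\<lambda>X Y Z. pr 1 \<xi> \<eta> F X Y Z + pr 2 \<xi> \<eta> F X Y Z + pr 3 \<xi> \<eta> F X Y Z + pr 4 \<xi> \<eta> F X Y Z)"
proof (intro ext)
  fix X Y Z
  have "F X Y Z = F (h X + \<eta> X *\<^sub>R \<xi>) (h Y + \<eta> Y *\<^sub>R \<xi>) (h Z + \<eta> Z *\<^sub>R \<xi>)"
    by (simp add: hproj_def)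
  also have "\<dots> = pr 1 \<xi> \<eta> F X Y Z + pr 2 \<xi> \<eta> F X Y Z + pr 3 \<xi> \<eta> F X Y Z + pr 4 \<xi> \<eta> F X Y Z"
    by (simp add: pr_simps trilinearD[OF calF_trilinear[OF F]] calF_xi[OF F] algebra_simps)
  finally show "F X Y Z = \<dots>" .
qed

lemma Wsp_subset_calF:
  assumes "i \<in> {1..4}"
  shows "Wsp i \<phi> \<xi> \<eta> g \<subseteq> calF \<phi> \<xi> \<eta> g"
  using pr_in_calF assms unfolding Wsp_def by blast

lemma Wsp_decomposition_unique:
  assumes W: "F1 \<in> Wsp 1 \<phi> \<xi> \<eta> g" "F2 \<in> Wsp 2 \<phi> \<xi> \<eta> g"
      "F3 \<in> Wsp 3 \<phi> \<xi> \<eta> g" "F4 \<in> Wsp 4 \<phi> \<xi> \<eta> g"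
    and F: "F = (\<lambda>X Y Z. F1 X Y Z + F2 X Y Z + F3 X Y Z + F4 X Y Z)"
  shows "F1 = pr 1 \<xi> \<eta> F \<and> F2 = pr 2 \<xi> \<eta> F \<and> F3 = pr 3 \<xi> \<eta> F \<and> F4 = pr 4 \<xi> \<eta> F"
proof -
  obtain G1 G2 G3 G4 where G: "G1 \<in> calF \<phi> \<xi> \<eta> g" "G2 \<in> calF \<phi> \<xi> \<eta> g"
      "G3 \<in> calF \<phi> \<xi> \<eta> g" "G4 \<in> calF \<phi> \<xi> \<eta> g"
    and F_pr: "F1 = pr 1 \<xi> \<eta> G1" "F2 = pr 2 \<xi> \<eta> G2" "F3 = pr 3 \<xi> \<eta> G3" "F4 = pr 4 \<xi> \<eta> G4"
    using W unfolding Wsp_def by blast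
  note [simp] = pr_pr[OF calF_trilinear[OF G(1)]] pr_pr[OF calF_trilinear[OF G(2)]]
    pr_pr[OF calF_trilinear[OF G(3)]] pr_pr[OF calF_trilinear[OF G(4)]]
  show ?thesis
    unfolding F F_pr by (simp add: pr_add)
qed

lemma Wsp_direct_sum:
  assumes F: "F \<in> calF \<phi> \<xi> \<eta> g"
  shows "\<exists>!(F1, F2, F3, F4). F1 \<in> Wsp 1 \<phi> \<xi> \<eta> g \<and> F2 \<in> Wsp 2 \<phi> \<xi> \<eta> g \<and>
    F3 \<in> Wsp 3 \<phi> \<xi> \<eta> g \<and> F4 \<in> Wsp 4 \<phi> \<xi> \<eta> g \<and>
    F = (\<lambda>X Y Z. F1 X Y Z + F2 X Y Z + F3 X Y Z + F4 X Y Z)"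
proof (rule ex1I[where a = "(pr 1 \<xi> \<eta> F, pr 2 \<xi> \<eta> F, pr 3 \<xi> \<eta> F, pr 4 \<xi> \<eta> F)"], goal_cases)
  case 1
  show ?case using calF_eq_sum_pr[OF F] F unfolding Wsp_def by auto
next
  case (2 y)
  then show ?case using Wsp_decomposition_unique by (cases y) auto
qed

lemma grpG_inverse:
  assumes a: "a \<in> grpG \<phi> \<xi> \<eta> g"
  shows "a (inv a X) = X" "inv a (a X) = X" "inv a \<in> grpG \<phi> \<xi> \<eta> g"
proof -
  have lin: "linear a" and "bij a" and phi: "\<And>X. a (\<phi> X) = \<phi> (a X)" and xi: "a \<xi> = \<xi>"
    and eta: "\<And>X. \<eta> (a X) = \<eta> X" and isometry: "\<And>X Y. g (a X) (a Y) = g X Y"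
    using a unfolding grpG_def by blast+
  have right: "a (inv a Y) = Y" and left: "inv a (a Y) = Y" for Y
    using \<open>bij a\<close> by (simp_all add: bij_is_surj surj_f_inv_f bij_is_inj)
  then show "a (inv a X) = X" "inv a (a X) = X" by simp_all
  have "linear (inv a)" by (rule eucl.inj_linear_imp_inv_linear[OF lin bij_is_inj[OF \<open>bij a\<close>]])
  moreover have "bij (inv a)" by (rule bij_imp_bij_inv[OF \<open>bij a\<close>])
  ultimately show "inv a \<in> grpG \<phi> \<xi> \<eta> g"
    unfolding grpG_def by (simp, metis right left phi xi eta isometry)
qed

lemma h_grpG_commute:
  assumes "a \<in> grpG \<phi> \<xi> \<eta> g"
  shows "h (a X) = a (h X)"
proof -
  have "linear a" "a \<xi> = \<xi>" "\<eta> (a X) = \<eta> X" using assms unfolding grpG_def by blast+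
  then show ?thesis by (simp add: hproj_def linear_diff linear_scale)
qed

lemma gact_pr:
  assumes a: "a \<in> grpG \<phi> \<xi> \<eta> g" and i: "i \<in> {1..4}"
  shows "gact a (pr i \<xi> \<eta> F) = pr i \<xi> \<eta> (gact a F)"
proof -
  have b: "inv a \<in> grpG \<phi> \<xi> \<eta> g" by (rule grpG_inverse(3)[OF a])
  then have "inv a \<xi> = \<xi>" "\<eta> (inv a X) = \<eta> X" for X unfolding grpG_def by blast+
  moreover have "i = 1 \<or> i = 2 \<or> i = 3 \<or> i = 4" using i by auto
  ultimately show ?thesis by (auto simp: pr_simps gact_def h_grpG_commute[OF b])
qed

lemma grpG_adjoint:
  assumes a: "a \<in> grpG \<phi> \<xi> \<eta> g"
  shows "g (a V) W = g V (inv a W)"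
proof -
  have "g (a V) (a (inv a W)) = g V (inv a W)" using a unfolding grpG_def by blast
  then show ?thesis by (simp add: grpG_inverse(1)[OF a])
qed

lemma admissible_grpG_transport:
  assumes a: "a \<in> grpG \<phi> \<xi> \<eta> g" and adm: "admissible A A\<^sub>\<xi>"
  shows "admissible (\<lambda>u X. a (A (inv a u) (inv a X))) (\<lambda>X. a (A\<^sub>\<xi> (inv a X)))"
proof -
  let ?b = "inv a"
  have la: "linear a" and a_phi: "\<And>X. a (\<phi> X) = \<phi> (a X)"
    using a unfolding grpG_def by blast+
  have lb: "linear ?b" and b_phi: "\<And>X. ?b (\<phi> X) = \<phi> (?b X)" and b_eta: "\<And>X. \<eta> (?b X) = \<eta> X"
    using grpG_inverse(3)[OF a] unfolding grpG_def by blast+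
  have A: "bilinear A" and lin: "linear A\<^sub>\<xi>"
    and skew: "\<And>X u w. \<eta> u = 0 \<Longrightarrow> \<eta> w = 0 \<Longrightarrow> g (A u X) w = - g (A w X) u"
    and A_phi: "\<And>X u. \<eta> u = 0 \<Longrightarrow> A (\<phi> u) X = - \<phi> (A u X) - g (A\<^sub>\<xi> X) u *\<^sub>R \<xi>"
    and eta_A: "\<And>X u. \<eta> u = 0 \<Longrightarrow> \<eta> (A u X) = - g (A\<^sub>\<xi> X) (\<phi> u)"
    and eta_A\<^sub>\<xi>: "\<And>X. \<eta> (A\<^sub>\<xi> X) = 0"
    using adm unfolding admissible_def by blast+
  note [simp] = linear_add[OF la] linear_scale[OF la] linear_diff[OF la] linear_neg[OF la]
    linear_add[OF lb] linear_scale[OF lb] linear_add[OF lin] linear_scale[OF lin]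
    bilinear_ladd[OF A] bilinear_radd[OF A] bilinear_lmul[OF A] bilinear_rmul[OF A]
    grpG_adjoint[OF a] b_phi b_eta
  show ?thesis
    unfolding admissible_def
  proof (intro conjI allI impI)
    show "bilinear (\<lambda>u X. a (A (?b u) (?b X)))" unfolding bilinear_def
      by (intro conjI allI linearI) simp_all
    show "linear (\<lambda>X. a (A\<^sub>\<xi> (?b X)))" by (rule linearI) simp_all
  next
    fix X u w :: "real^'n" assume "\<eta> u = 0" "\<eta> w = 0"
    then show "g (a (A (?b u) (?b X))) w = - g (a (A (?b w) (?b X))) u"
      using skew[of "?b u" "?b w" "?b X"] by simp
  next
    fix X u :: "real^'n" assume "\<eta> u = 0"
    then show "a (A (?b (\<phi> u)) (?b X)) = - \<phi> (a (A (?b u) (?b X))) - g (a (A\<^sub>\<xi> (?b X))) u *\<^sub>R \<xi>"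
      and "\<eta> (a (A (?b u) (?b X))) = - g (a (A\<^sub>\<xi> (?b X))) (\<phi> u)"
      using A_phi[of "?b u" "?b X"] eta_A[of "?b u" "?b X"] a unfolding grpG_def
      by (simp_all add: a_phi)
  next
    show "\<eta> (a (A\<^sub>\<xi> (?b X))) = 0" for X using a eta_A\<^sub>\<xi> unfolding grpG_def by simp
  qed
qed

lemma gact_tensor_of:
  assumes a: "a \<in> grpG \<phi> \<xi> \<eta> g"
  shows "gact a (tensor_of A A\<^sub>\<xi>) =
    tensor_of (\<lambda>u X. a (A (inv a u) (inv a X))) (\<lambda>X. a (A\<^sub>\<xi> (inv a X)))"
proof -
  have b: "inv a \<in> grpG \<phi> \<xi> \<eta> g" by (rule grpG_inverse(3)[OF a])
  then have "inv a (\<phi> X) = \<phi> (inv a X)" "\<eta> (inv a X) = \<eta> X" for X unfolding grpG_def by blast+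
  then show ?thesis
    by (intro ext) (simp add: gact_def tensor_of_def grpG_adjoint[OF a] h_grpG_commute[OF b])
qed

lemma gact_calF:
  assumes "a \<in> grpG \<phi> \<xi> \<eta> g" "G \<in> calF \<phi> \<xi> \<eta> g"
  shows "gact a G \<in> calF \<phi> \<xi> \<eta> g"
proof -
  obtain A A\<^sub>\<xi> where "admissible A A\<^sub>\<xi>" "G = tensor_of A A\<^sub>\<xi>"
    using assms(2) calF_iff by blast
  then show ?thesis
    unfolding calF_iff using admissible_grpG_transport[OF assms(1)] gact_tensor_of[OF assms(1)] by blast
qed

lemma gact_Wsp:
  assumes "i \<in> {1..4}" "a \<in> grpG \<phi> \<xi> \<eta> g" "F \<in> Wsp i \<phi> \<xi> \<eta> g"
  shows "gact a F \<in> Wsp i \<phi> \<xi> \<eta> g"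
  using assms gact_pr gact_calF unfolding Wsp_def by blast

lemma tinner_pr_pr_eq_0:
  assumes G: "G \<in> calF \<phi> \<xi> \<eta> g" and G': "G' \<in> calF \<phi> \<xi> \<eta> g"
    and ij: "i \<in> {1..4}" "j \<in> {1..4}" "i < j"
  shows "tinner g (pr i \<xi> \<eta> G) (pr j \<xi> \<eta> G') = 0"
proof -
  have tri: "trilinear (pr i \<xi> \<eta> G)"
    using calF_trilinear[OF pr_in_calF[OF G ij(1)]] .
  note G_0 = trilinearD(3,6,9)[OF calF_trilinear[OF G]]
  have "i \<in> {1, 2} \<and> j \<in> {3, 4} \<or> i = 1 \<and> j = 2 \<or> i = 3 \<and> j = 4" using ij by auto
  then show ?thesis
  proof (elim disjE conjE)
    assume i: "i \<in> {1, 2}" and j: "j \<in> {3, 4}"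
    show ?thesis
    proof (rule tinner_eq_0_slot1[OF tri, where v = \<xi> and K = "pr j \<xi> \<eta> G' \<xi>"])
      show "pr i \<xi> \<eta> G \<xi> Y Z = 0" for Y Z using i by (auto simp: pr_simps G_0)
      show "pr j \<xi> \<eta> G' X Y Z = g X \<xi> * pr j \<xi> \<eta> G' \<xi> Y Z" for X Y Z
        using j by (auto simp: pr_simps algebra_simps)
    qed
  next
    assume "i = 1" "j = 2"
    then show ?thesis
      using tri by (intro tinner_eq_0_slot23[where v = \<xi>
            and K = "\<lambda>X Z. - G' (h X) (h Z) \<xi>" and K' = "\<lambda>X Y. G' (h X) (h Y) \<xi>"])
        (simp_all add: pr_simps G_0)
  next
    assume "i = 3" "j = 4"
    then show ?thesis
      using tri by (intro tinner_eq_0_slot23[where v = \<xi>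
            and K = "\<lambda>X Z. \<eta> X * G' \<xi> \<xi> (h Z)" and K' = "\<lambda>X Y. - \<eta> X * G' \<xi> \<xi> (h Y)"])
        (simp_all add: pr_simps G_0)
  qed
qed

lemma Wsp_orthogonal:
  assumes ij: "i \<in> {1..4}" "j \<in> {1..4}" "i \<noteq> j"
    and F: "F \<in> Wsp i \<phi> \<xi> \<eta> g" and F': "F' \<in> Wsp j \<phi> \<xi> \<eta> g"
  shows "tinner g F F' = 0"
proof -
  obtain G G' where G: "G \<in> calF \<phi> \<xi> \<eta> g" "F = pr i \<xi> \<eta> G"
    and G': "G' \<in> calF \<phi> \<xi> \<eta> g" "F' = pr j \<xi> \<eta> G'"
    using F F' unfolding Wsp_def by blast
  show ?thesis
  proof (cases "i < j")
    case True
    then show ?thesis using tinner_pr_pr_eq_0[OF G(1) G'(1) ij(1,2)] G(2) G'(2) by simp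
  next
    case False
    then have "j < i" using ij(3) by simp
    then show ?thesis
      using tinner_pr_pr_eq_0[OF G'(1) G(1) ij(2,1)] G(2) G'(2) tinner_commute by simp
  qed
qed

end

theorem proposition2p1:
  fixes n :: nat and \<phi> :: "real^'n \<Rightarrow> real^'n" and \<xi> :: "real^'n"
    and \<eta> :: "real^'n \<Rightarrow> real" and g :: "real^'n \<Rightarrow> real^'n \<Rightarrow> real"
  assumes "structure_ok n \<phi> \<xi> \<eta> g"
  shows "(\<forall>i\<in>{1..4}. Wsp i \<phi> \<xi> \<eta> g \<subseteq> calF \<phi> \<xi> \<eta> g)
    \<and> (\<forall>F\<in>calF \<phi> \<xi> \<eta> g. \<exists>!(F1, F2, F3, F4).
          F1 \<in> Wsp 1 \<phi> \<xi> \<eta> g \<and> F2 \<in> Wsp 2 \<phi> \<xi> \<eta> g \<and>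
          F3 \<in> Wsp 3 \<phi> \<xi> \<eta> g \<and> F4 \<in> Wsp 4 \<phi> \<xi> \<eta> g \<and>
          F = (\<lambda>X Y Z. F1 X Y Z + F2 X Y Z + F3 X Y Z + F4 X Y Z))
    \<and> (\<forall>i\<in>{1..4}. \<forall>j\<in>{1..4}. i \<noteq> j \<longrightarrow>
          (\<forall>F\<in>Wsp i \<phi> \<xi> \<eta> g. \<forall>F'\<in>Wsp j \<phi> \<xi> \<eta> g. tinner g F F' = 0))
    \<and> (\<forall>i\<in>{1..4}. \<forall>a\<in>grpG \<phi> \<xi> \<eta> g. \<forall>F\<in>Wsp i \<phi> \<xi> \<eta> g.
          gact a F \<in> Wsp i \<phi> \<xi> \<eta> g)"
proof -
  interpret almost_paracontact_metric g \<phi> \<xi> \<eta>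
    using assms unfolding structure_ok_def
    by (intro almost_paracontact_metric.intro nondegenerate_symmetric_form.intro
        almost_paracontact_metric_axioms.intro) blast+
  show ?thesis
    by (intro conjI ballI impI Wsp_subset_calF Wsp_direct_sum Wsp_orthogonal gact_Wsp) assumption+
qed

end
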